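(* For every integer $n\ge0$, \[ B_{n+1,n+1}(x)=\frac12\,\frac{(3n+2)!}{n!\,(2n+1)!}\,p_n(x),\qquad A_{n+1,n+1}(x)=-B_{n+1,n+1}(-x). \] For every integer $n\ge1$, with $b_n=2\,(\tfrac n2+1)_n\,\frac{(2n)!}{(3n+1)!}$, \[ b_nB_{n+1,n}(x)=\binom{n+\frac n2}{n}q_n(x)-\binom{n+\frac{n-1}2}{n}p_n(x),\qquad b_nB_{n,n+1}(x)=\binom{n+\frac n2}{n}q_n(x)+\binom{n+\frac{n-1}2}{n}p_n(x), \] and $A_{n+1,n}(x)=B_{n,n+1}(-x)$, $A_{n,n+1}(x)=B_{n+1,n}(-x)$.
   Context: Pochhammer symbol: $(a)_0=1$, $(a)_n=a(a+1)\cdots(a+n-1)$; for real $a$ and integer $n\ge0$, $\binom{n+a}{n}:=\frac{(a+1)_n}{n!}$. Define $p_n(x)=\sum_{k=0}^n\binom nk\binom{n+\frac k2}{n}(-1)^{n-k}x^k$ and $q_n(x)=\sum_{k=0}^n\binom nk\binom{n+\frac{k-1}2}{n}(-1)^{n-k}x^k$. Type I Legendre–Angelesco polynomials: for integers $n,m\ge 0$ with $n+m\ge1$, $(A_{n,m},B_{n,m})$ is the unique pair of polynomials with $\deg A_{n,m}\le n-1$, $\deg B_{n,m}\le m-1$ such that, writing $Q_{n,m}=A_{n,m}\chi_{[-1,0]}+B_{n,m}\chi_{[0,1]}$, one has $\int_{-1}^1 Q_{n,m}(x)x^k\,dx=0$ for $0\le k\le n+m-2$ and $\int_{-1}^1 Q_{n,m}(x)x^{n+m-1}\,dx=1$.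 *)

theory Defs
  imports "HOL-Analysis.Analysis" "HOL-Computational_Algebra.Polynomial"
begin

text \<open>Generalized binomial coefficient binom(n+a, n) := (a+1)_n / n!\<close>
definition rbinom :: "real \<Rightarrow> nat \<Rightarrow> real" where
  "rbinom a n = pochhammer (a + 1) n / fact n"

definition p_poly :: "nat \<Rightarrow> real poly" where
  "p_poly n = (\<Sum>k\<le>n. monom (real (n choose k) * rbinom (real k / 2) n * (-1) ^ (n - k)) k)"

definition q_poly :: "nat \<Rightarrow> real poly" where
  "q_poly n = (\<Sum>k\<le>n. monom (real (n choose k) * rbinom ((real k - 1) / 2) n * (-1) ^ (n - k)) k)"

text \<open>Defining conditions of the type I Legendre-Angelesco pair (A,B) for indices (n,m).
  deg A \<le> n-1 is rendered as (A = 0 \<or> degree A < n), which for n = 0 forces A = 0.\<close>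
definition LA_cond :: "nat \<Rightarrow> nat \<Rightarrow> real poly \<Rightarrow> real poly \<Rightarrow> bool" where
  "LA_cond n m A B \<longleftrightarrow>
     (A = 0 \<or> degree A < n) \<and> (B = 0 \<or> degree B < m) \<and>
     (\<forall>k. k + 1 < n + m \<longrightarrow>
        integral {-1..0} (\<lambda>x. poly A x * x ^ k) + integral {0..1} (\<lambda>x. poly B x * x ^ k) = 0) \<and>
     integral {-1..0} (\<lambda>x. poly A x * x ^ (n + m - 1)) + integral {0..1} (\<lambda>x. poly B x * x ^ (n + m - 1)) = 1"

definition LA_pair :: "nat \<Rightarrow> nat \<Rightarrow> real poly \<times> real poly" where
  "LA_pair n m = (THE AB. LA_cond n m (fst AB) (snd AB))"

definition LA_A :: "nat \<Rightarrow> nat \<Rightarrow> real poly" where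
  "LA_A n m = fst (LA_pair n m)"

definition LA_B :: "nat \<Rightarrow> nat \<Rightarrow> real poly" where
  "LA_B n m = snd (LA_pair n m)"

end

theory Submission
  imports Defs
begin

text \<open>
  Uniqueness: if \<open>deg A < n\<close>, \<open>deg B < m\<close> and all moments of \<open>(A, B)\<close> of order \<open>< n + m\<close>
  vanish, take a polynomial \<open>Q\<close> of degree \<open>< n + m\<close> whose roots are the sign changes of \<open>A\<close> in
  \<open>(-1, 0)\<close> and of \<open>B\<close> in \<open>(0, 1)\<close>, times a linear factor fixing the signs, so that
  \<open>A Q \<ge> 0\<close> on \<open>[-1, 0]\<close> and \<open>B Q \<ge> 0\<close> on \<open>[0, 1]\<close>. Then \<open>\<integral>A Q + \<integral>B Q\<close>, a combination of
  vanishing moments, is \<open>0\<close>, which forces \<open>A = B = 0\<close>.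

  Existence: all candidate pairs have the form \<open>A(x) = C(-x)\<close>, and reflection multiplies the
  \<open>k\<close>-th moment by \<open>(-1)^k\<close>, so everything reduces to the moments \<open>\<integral>\<^sub>0\<^sup>1 P(x) x^k dx\<close> of
  \<open>p\<^sub>n\<close> and \<open>q\<^sub>n\<close>. Writing \<open>binom(n + (i - e)/2, n) = R(i) / (2^n n!)\<close> with \<open>R\<close> a polynomial of
  degree \<open>n\<close> (\<open>e = 0\<close> for \<open>p\<^sub>n\<close>, \<open>e = 1\<close> for \<open>q\<^sub>n\<close>), such a moment is the \<open>n\<close>-th finite
  difference \<open>\<Sum>\<^sub>i binom(n, i) (-1)^i R(i) / (i + k + 1)\<close>. It vanishes whenever \<open>x + k + 1\<close> divides
  \<open>R\<close>, i.e. for odd \<open>k < 2n\<close> (\<open>p\<^sub>n\<close>) and even \<open>k < 2n\<close> (\<open>q\<^sub>n\<close>); at the next order only the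
  remainder of \<open>R\<close> modulo \<open>x + k + 1\<close> survives and yields \<open>n! / (k + 1)\<^sub>n\<^sub>+\<^sub>1\<close>.
\<close>

section \<open>Alternating binomial sums\<close>

definition alt_binom_sum :: "nat \<Rightarrow> (nat \<Rightarrow> real) \<Rightarrow> real" where
  "alt_binom_sum n g = (\<Sum>k\<le>n. real (n choose k) * (-1) ^ k * g k)"

lemma alt_binom_sum_Suc:
  "alt_binom_sum (Suc n) g = alt_binom_sum n g - alt_binom_sum n (\<lambda>k. g (Suc k))"
proof -
  have shift: "(\<Sum>i\<le>n. real (n choose Suc i) * (-1) ^ Suc i * g (Suc i)) = alt_binom_sum n g - g 0"
  proof -
    have "alt_binom_sum n g = (\<Sum>k\<le>Suc n. real (n choose k) * (-1) ^ k * g k)"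
      unfolding alt_binom_sum_def by simp
    also have "\<dots> = g 0 + (\<Sum>i\<le>n. real (n choose Suc i) * (-1) ^ Suc i * g (Suc i))"
      by (subst sum.atMost_Suc_shift) simp
    finally show ?thesis by simp
  qed
  have "alt_binom_sum (Suc n) g
      = g 0 + (\<Sum>i\<le>n. real (Suc n choose Suc i) * (-1) ^ Suc i * g (Suc i))"
    unfolding alt_binom_sum_def by (subst sum.atMost_Suc_shift) simp
  also have "\<dots> = g 0 + (\<Sum>i\<le>n. real (n choose i) * (-1) ^ Suc i * g (Suc i))
                  + (\<Sum>i\<le>n. real (n choose Suc i) * (-1) ^ Suc i * g (Suc i))"
    by (simp add: sum.distrib[symmetric] algebra_simps)
  also have "\<dots> = alt_binom_sum n g - alt_binom_sum n (\<lambda>k. g (Suc k))"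
    unfolding shift by (simp add: alt_binom_sum_def sum_negf)
  finally show ?thesis .
qed

lemma alt_binom_sum_diff:
  "alt_binom_sum n (\<lambda>k. f k - g k) = alt_binom_sum n f - alt_binom_sum n g"
  unfolding alt_binom_sum_def by (simp add: algebra_simps sum_subtractf)

lemma degree_forward_difference_less:
  fixes P :: "'a::idom poly"
  assumes "degree P > 0"
  shows "degree (P \<circ>\<^sub>p [:1, 1:] - P) < degree P"
proof -
  have "degree (P \<circ>\<^sub>p [:1, 1:] - P) \<le> degree P"
    using degree_pcompose[of P "[:1, 1:]"] by (intro degree_diff_le) auto
  moreover have "coeff (P \<circ>\<^sub>p [:1, 1:] - P) (degree P) = 0"
    using lead_coeff_comp[of "[:1, 1:]" P] degree_pcompose[of P "[:1, 1:]"] by simp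
  ultimately show ?thesis
    using assms by (metis le_neq_implies_less leading_coeff_0_iff degree_0 neq0_conv)
qed

lemma alt_binom_sum_poly_eq_0:
  "degree P < n \<Longrightarrow> alt_binom_sum n (\<lambda>k. poly P (real k)) = 0"
proof (induction n arbitrary: P)
  case 0
  then show ?case by simp
next
  case (Suc n)
  define D where "D = P \<circ>\<^sub>p [:1, 1:] - P"
  have "alt_binom_sum (Suc n) (\<lambda>k. poly P (real k)) = - alt_binom_sum n (\<lambda>k. poly D (real k))"
    unfolding alt_binom_sum_Suc D_def by (simp add: alt_binom_sum_diff poly_pcompose algebra_simps)
  moreover have "alt_binom_sum n (\<lambda>k. poly D (real k)) = 0"
  proof (cases "degree P = 0")
    case True
    then have "D = 0"
      unfolding D_def by (metis degree_eq_zeroE pcompose_const diff_self)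
    then show ?thesis by (simp add: alt_binom_sum_def)
  next
    case False
    then have "degree D < n"
      using Suc.prems degree_forward_difference_less[of P] unfolding D_def by simp
    then show ?thesis by (rule Suc.IH)
  qed
  ultimately show ?case by simp
qed

lemma alt_binom_sum_reciprocal:
  "a > 0 \<Longrightarrow> alt_binom_sum n (\<lambda>k. 1 / (real k + a)) = fact n / pochhammer a (Suc n)"
proof (induction n arbitrary: a)
  case 0
  then show ?case by (simp add: alt_binom_sum_def)
next
  case (Suc n)
  define X where "X = pochhammer a (Suc n)"
  define Y where "Y = pochhammer (a + 1) (Suc n)"
  have pos: "X > 0" "Y > 0"
    unfolding X_def Y_def using Suc.prems by (auto intro: pochhammer_pos)
  have rec: "a * Y = (a + real (Suc n)) * X"
    using pochhammer_rec[of a "Suc n"] pochhammer_rec'[of a "Suc n"] unfolding X_def Y_def by simp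
  have "alt_binom_sum (Suc n) (\<lambda>k. 1 / (real k + a))
      = alt_binom_sum n (\<lambda>k. 1 / (real k + a)) - alt_binom_sum n (\<lambda>k. 1 / (real k + (a + 1)))"
    unfolding alt_binom_sum_Suc by (simp add: algebra_simps)
  also have "\<dots> = fact n / X - fact n / Y"
    unfolding X_def Y_def using Suc by simp
  also have "\<dots> = fact n * (a * Y - a * X) / (a * X * Y)"
    using pos Suc.prems by (simp add: field_simps)
  also have "a * Y - a * X = real (Suc n) * X"
    using rec by (simp add: algebra_simps)
  also have "fact n * (real (Suc n) * X) / (a * X * Y) = fact (Suc n) / (a * Y)"
    using pos Suc.prems by (simp add: field_simps del: of_nat_Suc)
  also have "a * Y = pochhammer a (Suc (Suc n))"
    unfolding Y_def by (simp add: pochhammer_rec)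
  finally show ?case .
qed

section \<open>Moments of \<open>p\<^sub>n\<close> and \<open>q\<^sub>n\<close> on \<open>[0, 1]\<close>\<close>

definition LA_poly :: "real \<Rightarrow> nat \<Rightarrow> real poly" where
  "LA_poly e n = (\<Sum>k\<le>n. monom (real (n choose k) * rbinom ((real k - e) / 2) n * (-1) ^ (n - k)) k)"

lemma p_poly_eq_LA_poly: "p_poly n = LA_poly 0 n"
  unfolding p_poly_def LA_poly_def by simp

lemma q_poly_eq_LA_poly: "q_poly n = LA_poly 1 n"
  unfolding q_poly_def LA_poly_def by simp

lemma degree_LA_poly: "degree (LA_poly e n) \<le> n"
  unfolding LA_poly_def by (rule degree_sum_le) (auto intro: order.trans[OF degree_monom_le])

lemma coeff_LA_poly_top: "coeff (LA_poly e n) n = rbinom ((real n - e) / 2) n"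
  unfolding LA_poly_def by (simp add: coeff_sum)

definition rbinom_numerator :: "real \<Rightarrow> nat \<Rightarrow> real poly" where
  "rbinom_numerator e n = (\<Prod>l<n. [:2 + 2 * real l - e, 1:])"

lemma poly_rbinom_numerator: "poly (rbinom_numerator e n) x = (\<Prod>l<n. 2 + 2 * real l - e + x)"
  unfolding rbinom_numerator_def by (simp add: poly_prod)

lemma degree_rbinom_numerator: "degree (rbinom_numerator e n) \<le> n"
  using degree_prod_sum_le[of "{..<n}" "\<lambda>l. [:2 + 2 * real l - e, 1:]"]
  unfolding rbinom_numerator_def by simp

lemma rbinom_eq_rbinom_numerator:
  "rbinom ((x - e) / 2) n = poly (rbinom_numerator e n) x / (2 ^ n * fact n)"
proof -
  have "pochhammer ((x - e) / 2 + 1) n = (\<Prod>l<n. (2 + 2 * real l - e + x) / 2)"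
    unfolding pochhammer_prod by (intro prod.cong) (auto simp: field_simps lessThan_atLeast0)
  also have "\<dots> = poly (rbinom_numerator e n) x / 2 ^ n"
    unfolding poly_rbinom_numerator by (simp add: prod_dividef)
  finally show ?thesis unfolding rbinom_def by simp
qed

definition moment01 :: "real poly \<Rightarrow> nat \<Rightarrow> real" where
  "moment01 C k = integral {0..1} (\<lambda>x. poly C x * x ^ k)"

lemma integrable_poly_mult_power: "(\<lambda>x. poly C x * x ^ k) integrable_on {a..b::real}"
  by (intro integrable_continuous_real continuous_intros)

lemma moment01_add: "moment01 (C + D) k = moment01 C k + moment01 D k"
  unfolding moment01_def
  by (simp add: distrib_right integral_add integrable_poly_mult_power)

lemma moment01_smult: "moment01 (smult c C) k = c * moment01 C k"
  unfolding moment01_def by (simp add: mult.assoc)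

lemma has_integral_power_01: "((\<lambda>x::real. x ^ j) has_integral 1 / real (Suc j)) {0..1}"
proof -
  have "((\<lambda>x::real. x ^ j) has_integral 1 ^ Suc j / real (Suc j) - 0 ^ Suc j / real (Suc j)) {0..1}"
  proof (rule fundamental_theorem_of_calculus)
    fix x :: real
    have "((\<lambda>x. x ^ Suc j / real (Suc j)) has_real_derivative real (Suc j) * x ^ j / real (Suc j))
        (at x within {0..1})"
      by (intro DERIV_cdivide) (use DERIV_pow[of "Suc j" x] in simp)
    then show "((\<lambda>x. x ^ Suc j / real (Suc j)) has_vector_derivative x ^ j) (at x within {0..1})"
      by (simp add: has_real_derivative_iff_has_vector_derivative del: of_nat_Suc)
  qed simp
  then show ?thesis by simp
qed

lemma moment01_sum_monom:
  "moment01 (\<Sum>i\<le>n. monom (c i) i) k = (\<Sum>i\<le>n. c i / (real i + real k + 1))"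
proof -
  have "((\<lambda>x::real. \<Sum>i\<le>n. c i * x ^ (i + k)) has_integral (\<Sum>i\<le>n. c i / (real i + real k + 1))) {0..1}"
  proof (rule has_integral_sum)
    fix i
    show "((\<lambda>x::real. c i * x ^ (i + k)) has_integral c i / (real i + real k + 1)) {0..1}"
      using has_integral_mult_right[OF has_integral_power_01[of "i + k"], of "c i"] by (simp add: add_ac)
  qed simp
  moreover have "(\<lambda>x. poly (\<Sum>i\<le>n. monom (c i) i) x * x ^ k) = (\<lambda>x. \<Sum>i\<le>n. c i * x ^ (i + k))"
    by (simp add: poly_sum poly_monom sum_distrib_right power_add mult.assoc)
  ultimately show ?thesis
    unfolding moment01_def by (simp add: integral_unique)
qed

lemma neg_one_power_diff: "i \<le> n \<Longrightarrow> (-1::real) ^ (n - i) = (-1) ^ n * (-1) ^ i"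
  by (auto simp: minus_one_power_iff)

lemma moment01_LA_poly:
  "moment01 (LA_poly e n) k
     = (-1) ^ n / (2 ^ n * fact n)
       * alt_binom_sum n (\<lambda>i. poly (rbinom_numerator e n) (real i) / (real i + real k + 1))"
  unfolding LA_poly_def moment01_sum_monom alt_binom_sum_def rbinom_eq_rbinom_numerator sum_distrib_left
  by (intro sum.cong refl) (simp add: neg_one_power_diff)

lemma moment01_LA_poly_eq_0:
  assumes "e < 2" "1 \<le> m" "m \<le> n" "real k + 1 = 2 * real m - e"
  shows "moment01 (LA_poly e n) k = 0"
proof -
  define R where "R = (\<Prod>l\<in>{..<n} - {m - 1}. [:2 + 2 * real l - e, 1:])"
  have "rbinom_numerator e n = [:2 + 2 * real (m - 1) - e, 1:] * R"
    unfolding rbinom_numerator_def R_def using assms by (intro prod.remove) auto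
  \<comment> \<open>the denominator \<open>i + k + 1\<close> is a factor of the numerator\<close>
  moreover have "2 + 2 * real (m - 1) - e = real k + 1"
    using assms by (simp add: of_nat_diff)
  ultimately have factor: "rbinom_numerator e n = [:real k + 1, 1:] * R"
    by (simp only:)
  have "degree R < n"
    using degree_prod_sum_le[of "{..<n} - {m - 1}" "\<lambda>l. [:2 + 2 * real l - e, 1:]"] assms
    unfolding R_def by simp
  then have "alt_binom_sum n (\<lambda>i. poly R (real i)) = 0"
    by (rule alt_binom_sum_poly_eq_0)
  moreover have "poly (rbinom_numerator e n) (real i) / (real i + real k + 1) = poly R (real i)" for i
  proof -
    have "real i + (real k + 1) \<noteq> 0" by linarith
    then show ?thesis unfolding factor by (simp add: field_simps)
  qed
  ultimately show ?thesis
    unfolding moment01_LA_poly by simp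
qed

lemma moment01_LA_poly_top:
  assumes "e < 2" "real k + 1 = 2 * real n + 2 - e"
  shows "moment01 (LA_poly e n) k = fact n / pochhammer (real k + 1) (Suc n)"
proof -
  \<comment> \<open>divide the numerator by \<open>x + k + 1\<close>: the quotient has degree \<open>< n\<close> and contributes nothing\<close>
  define a where "a = real k + 1"
  define R where "R = synthetic_div (rbinom_numerator e n) (-a)"
  have a: "a > 0"
    unfolding a_def by simp
  have split: "rbinom_numerator e n = [:a, 1:] * R + [:poly (rbinom_numerator e n) (-a):]"
    unfolding R_def using synthetic_div_correct'[of "-a" "rbinom_numerator e n"] by simp
  have "poly (rbinom_numerator e n) (-a) = (\<Prod>l<n. 2 * (- real n + real l))"
    unfolding poly_rbinom_numerator a_def using assms by (intro prod.cong) (auto simp: algebra_simps)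
  also have "\<dots> = 2 ^ n * pochhammer (- real n) n"
    by (simp only: prod.distrib) (simp add: pochhammer_prod lessThan_atLeast0)
  finally have remainder: "poly (rbinom_numerator e n) (-a) = 2 ^ n * (-1) ^ n * fact n"
    by (simp add: pochhammer_same)
  have "degree R < n \<or> R = 0"
    unfolding R_def using degree_rbinom_numerator[of e n]
    by (cases n) (auto simp: degree_synthetic_div synthetic_div_eq_0_iff rbinom_numerator_def)
  then have quotient: "alt_binom_sum n (\<lambda>i. poly R (real i)) = 0"
    by (auto simp: alt_binom_sum_poly_eq_0) (simp add: alt_binom_sum_def)
  have "alt_binom_sum n (\<lambda>i. poly (rbinom_numerator e n) (real i) / (real i + real k + 1))
      = alt_binom_sum n (\<lambda>i. poly R (real i))
        + poly (rbinom_numerator e n) (-a) * alt_binom_sum n (\<lambda>i. 1 / (real i + a))"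
    unfolding alt_binom_sum_def sum_distrib_left sum.distrib[symmetric]
  proof (intro sum.cong refl)
    fix i
    have "real i + a > 0" using a by simp
    then show "real (n choose i) * (-1) ^ i * (poly (rbinom_numerator e n) (real i) / (real i + real k + 1))
        = real (n choose i) * (-1) ^ i * poly R (real i)
          + poly (rbinom_numerator e n) (-a) * (real (n choose i) * (-1) ^ i * (1 / (real i + a)))"
      unfolding a_def by (subst (1) split) (simp add: field_simps a_def)
  qed
  then show ?thesis
    unfolding moment01_LA_poly quotient remainder alt_binom_sum_reciprocal[OF a]
    by (simp add: a_def)
qed

lemma pochhammer_Suc_of_nat_eq_fact_div:
  "pochhammer (real m + 1) (Suc n) = fact (m + Suc n) / fact m"
proof -
  have "fact (m + Suc n) = (fact m :: real) * pochhammer (real m + 1) (Suc n)"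
    using pochhammer_product'[of "1::real" m "Suc n"] by (simp add: pochhammer_fact add_ac)
  then show ?thesis by simp
qed

lemma moment01_p_poly_odd: "odd k \<Longrightarrow> k < 2 * n + 1 \<Longrightarrow> moment01 (p_poly n) k = 0"
  unfolding p_poly_eq_LA_poly
  by (elim oddE, rule moment01_LA_poly_eq_0[where m = "k div 2 + 1"]) auto

lemma moment01_q_poly_even: "even k \<Longrightarrow> k < 2 * n \<Longrightarrow> moment01 (q_poly n) k = 0"
  unfolding q_poly_eq_LA_poly
  by (elim evenE, rule moment01_LA_poly_eq_0[where m = "k div 2 + 1"]) auto

lemma moment01_p_poly_top: "moment01 (p_poly n) (2 * n + 1) = fact n * fact (2 * n + 1) / fact (3 * n + 2)"
  using moment01_LA_poly_top[of 0 "2 * n + 1" n] pochhammer_Suc_of_nat_eq_fact_div[of "2 * n + 1" n]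
  unfolding p_poly_eq_LA_poly by (simp add: algebra_simps)

lemma moment01_q_poly_top: "moment01 (q_poly n) (2 * n) = fact n * fact (2 * n) / fact (3 * n + 1)"
  using moment01_LA_poly_top[of 1 "2 * n" n] pochhammer_Suc_of_nat_eq_fact_div[of "2 * n" n]
  unfolding q_poly_eq_LA_poly by (simp add: algebra_simps)

section \<open>Uniqueness of type I Legendre--Angelesco pairs\<close>

definition LA_moment :: "real poly \<Rightarrow> real poly \<Rightarrow> nat \<Rightarrow> real" where
  "LA_moment A B k = integral {-1..0} (\<lambda>x. poly A x * x ^ k) + integral {0..1} (\<lambda>x. poly B x * x ^ k)"

lemma LA_cond_iff_LA_moment:
  "LA_cond n m A B \<longleftrightarrow>
     (A = 0 \<or> degree A < n) \<and> (B = 0 \<or> degree B < m) \<and>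
     (\<forall>k. k + 1 < n + m \<longrightarrow> LA_moment A B k = 0) \<and> LA_moment A B (n + m - 1) = 1"
  unfolding LA_cond_def LA_moment_def ..

lemma LA_moment_diff: "LA_moment (A - A') (B - B') k = LA_moment A B k - LA_moment A' B' k"
  unfolding LA_moment_def
  by (simp add: left_diff_distrib integral_diff integrable_poly_mult_power)

lemma poly_mult_nonneg_if_no_root_between:
  fixes P :: "real poly"
  assumes "x \<le> y" "\<And>z. x < z \<Longrightarrow> z < y \<Longrightarrow> poly P z \<noteq> 0"
  shows "0 \<le> poly P x * poly P y"
proof (rule ccontr)
  assume neg: "\<not> 0 \<le> poly P x * poly P y"
  then have "x < y"
    using assms(1) by (cases "x = y") auto
  with neg obtain z where "x < z" "z < y" "poly P z = 0"
    using poly_IVT[of x y P] by auto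
  with assms(2) show False by blast
qed

lemma poly_mult_nonneg_if_no_root_in:
  fixes P :: "real poly"
  assumes "\<forall>z. a < z \<and> z < b \<longrightarrow> poly P z \<noteq> 0" "x \<in> {a..b}" "y \<in> {a..b}"
  shows "0 \<le> poly P x * poly P y"
proof (cases "x \<le> y")
  case True
  then show ?thesis
    using assms by (intro poly_mult_nonneg_if_no_root_between) auto
next
  case False
  then have "0 \<le> poly P y * poly P x"
    using assms by (intro poly_mult_nonneg_if_no_root_between) auto
  then show ?thesis
    by (simp add: mult.commute)
qed

lemma exists_sign_multiplier:
  fixes a b :: real and A :: "real poly"
  assumes "a < b"
  shows "\<exists>P. P \<noteq> 0 \<and> degree P \<le> degree A \<and> (\<forall>x. poly P x = 0 \<longrightarrow> a < x \<and> x < b)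
           \<and> (\<forall>x\<in>{a..b}. 0 \<le> poly A x * poly P x)"
proof (induction "degree A" arbitrary: A rule: less_induct)
  case less
  consider "A = 0" | r where "A \<noteq> 0" "a < r" "r < b" "poly A r = 0"
    | "\<forall>r. a < r \<and> r < b \<longrightarrow> poly A r \<noteq> 0"
    by blast
  then show ?case
  proof cases
    case 1
    then show ?thesis by (intro exI[of _ 1]) auto
  next
    case 2
    then obtain A1 where A1: "A = [:-r, 1:] * A1"
      using poly_eq_0_iff_dvd by blast
    with 2 have "degree A = Suc (degree A1)"
      by (subst A1, subst degree_mult_eq) auto
    then obtain P1 where P1: "P1 \<noteq> 0" "degree P1 \<le> degree A1"
        "\<forall>x. poly P1 x = 0 \<longrightarrow> a < x \<and> x < b" "\<forall>x\<in>{a..b}. 0 \<le> poly A1 x * poly P1 x"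
      using less[of A1] by auto
    define P where "P = [:-r, 1:] * P1"
    have "P \<noteq> 0" "degree P = Suc (degree P1)"
      unfolding P_def using P1(1) by (simp_all add: degree_mult_eq del: mult_pCons_left)
    moreover have "poly P x = 0 \<longleftrightarrow> x = r \<or> poly P1 x = 0" for x
      unfolding P_def by auto
    moreover have "poly A x * poly P x = (x - r)\<^sup>2 * (poly A1 x * poly P1 x)" for x
      unfolding A1 P_def by (simp add: power2_eq_square algebra_simps)
    ultimately show ?thesis
      using P1 2 \<open>degree A = Suc (degree A1)\<close> by (intro exI[of _ P]) auto
  next
    case 3
    define c where "c = (a + b) / 2"
    have c: "a < c" "c < b"
      unfolding c_def using assms by auto
    have "0 \<le> poly A x * poly A c" if "x \<in> {a..b}" for x
      using 3 that c by (intro poly_mult_nonneg_if_no_root_in) auto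
    then show ?thesis
      using 3 c by (intro exI[of _ "[:poly A c:]"]) auto
  qed
qed

lemma exists_linear_sign_pattern:
  fixes s t :: real
  assumes "s \<noteq> 0" "t \<noteq> 0"
  shows "\<exists>L. L \<noteq> 0 \<and> degree L \<le> 1 \<and> (\<forall>x\<le>0. 0 \<le> s * poly L x) \<and> (\<forall>x\<ge>0. 0 \<le> t * poly L x)"
proof (cases "s * t > 0")
  case True
  then show ?thesis
    using assms by (intro exI[of _ "[:s:]"]) (auto simp: mult.commute)
next
  case False
  have "0 \<le> s * poly [:0, -s:] x" if "x \<le> 0" for x
    using that mult_nonpos_nonneg[of x "s * s"] by (simp add: algebra_simps)
  moreover have "0 \<le> t * poly [:0, -s:] x" if "x \<ge> 0" for x
    using that False mult_nonpos_nonneg[of "s * t" x] by (simp add: algebra_simps)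
  ultimately show ?thesis
    using assms by (intro exI[of _ "[:0, -s:]"]) auto
qed

lemma nonneg_mult_by_common_sign:
  fixes a b s :: real
  assumes "s \<noteq> 0" "0 \<le> s * a" "0 \<le> s * b"
  shows "0 \<le> a * b"
proof -
  have "0 \<le> (a * b) * s\<^sup>2"
    using mult_nonneg_nonneg[OF assms(2,3)] by (simp add: power2_eq_square mult_ac)
  then show ?thesis
    using assms(1) by (simp add: zero_le_mult_iff)
qed

lemma poly_eq_0_if_nonneg_integral_eq_0:
  fixes F :: "real poly"
  assumes "a < b" "\<forall>x\<in>{a..b}. 0 \<le> poly F x" "integral {a..b} (poly F) = 0"
  shows "F = 0"
proof (rule ccontr)
  assume "F \<noteq> 0"
  have "\<forall>x\<in>{a..b}. poly F x = 0"
    using assms by (intro integral_eq_0_iff[THEN iffD1]) (auto intro: continuous_intros)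
  then have "{a..b} \<subseteq> {x. poly F x = 0}"
    by auto
  with \<open>F \<noteq> 0\<close> show False
    using poly_roots_finite infinite_Icc[OF assms(1)] finite_subset by blast
qed

lemma integral_poly_mult_eq_sum:
  "integral {a..b::real} (\<lambda>x. poly A x * poly P x)
     = (\<Sum>i\<le>degree P. coeff P i * integral {a..b} (\<lambda>x. poly A x * x ^ i))"
proof -
  have "integral {a..b} (\<lambda>x. poly A x * poly P x)
      = integral {a..b} (\<lambda>x. \<Sum>i\<le>degree P. coeff P i * (poly A x * x ^ i))"
    by (simp add: poly_altdef sum_distrib_left algebra_simps)
  also have "\<dots> = (\<Sum>i\<le>degree P. coeff P i * integral {a..b} (\<lambda>x. poly A x * x ^ i))"
    by (subst integral_sum) (auto intro!: integrable_continuous_real continuous_intros)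
  finally show ?thesis .
qed

lemma exists_angelesco_sign_multiplier:
  fixes A B :: "real poly"
  obtains Q where "Q \<noteq> 0" "degree Q \<le> degree A + degree B + 1"
    "\<And>x. x \<in> {-1..0} \<Longrightarrow> 0 \<le> poly A x * poly Q x"
    "\<And>x. x \<in> {0..1} \<Longrightarrow> 0 \<le> poly B x * poly Q x"
proof -
  obtain PA where PA: "PA \<noteq> 0" "degree PA \<le> degree A" "\<forall>x. poly PA x = 0 \<longrightarrow> -1 < x \<and> x < 0"
      "\<forall>x\<in>{-1..0}. 0 \<le> poly A x * poly PA x"
    using exists_sign_multiplier[of "-1" 0 A] by auto
  obtain PB where PB: "PB \<noteq> 0" "degree PB \<le> degree B" "\<forall>x. poly PB x = 0 \<longrightarrow> 0 < x \<and> x < 1"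
      "\<forall>x\<in>{0..1}. 0 \<le> poly B x * poly PB x"
    using exists_sign_multiplier[of 0 1 B] by auto
  define s where "s = poly PB (-1)"
  define t where "t = poly PA 0"
  have "s \<noteq> 0" "t \<noteq> 0"
    unfolding s_def t_def using PA(3) PB(3) by fastforce+
  \<comment> \<open>\<open>PB\<close> has the sign of \<open>s\<close> on \<open>[-1, 0]\<close>, \<open>PA\<close> that of \<open>t\<close> on \<open>[0, 1]\<close>\<close>
  then obtain L where L: "L \<noteq> 0" "degree L \<le> 1"
      "\<forall>x\<le>0. 0 \<le> s * poly L x" "\<forall>x\<ge>0. 0 \<le> t * poly L x"
    using exists_linear_sign_pattern by blast
  have PB_sign: "0 \<le> s * poly PB x" if "x \<in> {-1..0}" for x
    unfolding s_def using PB(3) that by (intro poly_mult_nonneg_if_no_root_in[where a = "-1" and b = 0]) force+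
  have PA_sign: "0 \<le> t * poly PA x" if "x \<in> {0..1}" for x
    unfolding t_def using PA(3) that by (intro poly_mult_nonneg_if_no_root_in[where a = 0 and b = 1]) force+
  show ?thesis
  proof (rule that[of "PA * PB * L"])
    show "PA * PB * L \<noteq> 0"
      using PA(1) PB(1) L(1) by simp
    show "degree (PA * PB * L) \<le> degree A + degree B + 1"
      using PA(1,2) PB(1,2) L(1,2) by (simp add: degree_mult_eq)
  next
    fix x :: real
    assume x: "x \<in> {-1..0}"
    have PBL: "0 \<le> poly PB x * poly L x"
      by (rule nonneg_mult_by_common_sign[OF \<open>s \<noteq> 0\<close> PB_sign[OF x]]) (use L(3) x in auto)
    show "0 \<le> poly A x * poly (PA * PB * L) x"
      using mult_nonneg_nonneg[OF PA(4)[rule_format, OF x] PBL] by (simp only: poly_mult mult_ac)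
  next
    fix x :: real
    assume x: "x \<in> {0..1}"
    have PAL: "0 \<le> poly PA x * poly L x"
      by (rule nonneg_mult_by_common_sign[OF \<open>t \<noteq> 0\<close> PA_sign[OF x]]) (use L(4) x in auto)
    show "0 \<le> poly B x * poly (PA * PB * L) x"
      using mult_nonneg_nonneg[OF PB(4)[rule_format, OF x] PAL] by (simp only: poly_mult mult_ac)
  qed
qed

lemma LA_moments_eq_0_imp_eq_0:
  assumes "degree A < n" "degree B < m" "\<And>k. k < n + m \<Longrightarrow> LA_moment A B k = 0"
  shows "A = 0 \<and> B = 0"
proof -
  obtain Q where "Q \<noteq> 0" "degree Q \<le> degree A + degree B + 1"
    and nonneg_A: "\<And>x. x \<in> {-1..0} \<Longrightarrow> 0 \<le> poly A x * poly Q x"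
    and nonneg_B: "\<And>x. x \<in> {0..1} \<Longrightarrow> 0 \<le> poly B x * poly Q x"
    using exists_angelesco_sign_multiplier[of A B] by blast
  define IA where "IA = integral {-1..0} (\<lambda>x. poly A x * poly Q x)"
  define IB where "IB = integral {0..1} (\<lambda>x. poly B x * poly Q x)"
  have "IA + IB = (\<Sum>i\<le>degree Q. coeff Q i * LA_moment A B i)"
    unfolding IA_def IB_def integral_poly_mult_eq_sum LA_moment_def
    by (simp add: sum.distrib distrib_left)
  also have "\<dots> = 0"
    using assms \<open>degree Q \<le> degree A + degree B + 1\<close> by (intro sum.neutral) auto
  finally have "IA + IB = 0" .
  moreover have "0 \<le> IA" "0 \<le> IB"
    unfolding IA_def IB_def using nonneg_A nonneg_B
    by (auto intro!: integral_nonneg integrable_continuous_real continuous_intros)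
  ultimately have "IA = 0" "IB = 0"
    by linarith+
  have "A * Q = 0"
    using nonneg_A \<open>IA = 0\<close> unfolding IA_def
    by (intro poly_eq_0_if_nonneg_integral_eq_0[of "-1" 0]) (auto simp: poly_mult[abs_def])
  moreover have "B * Q = 0"
    using nonneg_B \<open>IB = 0\<close> unfolding IB_def
    by (intro poly_eq_0_if_nonneg_integral_eq_0[of 0 1]) (auto simp: poly_mult[abs_def])
  ultimately show ?thesis
    using \<open>Q \<noteq> 0\<close> by simp
qed

lemma LA_cond_unique:
  assumes "LA_cond n m A B" "LA_cond n m A' B'" "1 \<le> n" "1 \<le> m"
  shows "A = A' \<and> B = B'"
proof -
  have "degree A < n" "degree A' < n" "degree B < m" "degree B' < m"
    and zero: "\<And>k. k + 1 < n + m \<Longrightarrow> LA_moment A B k = 0 \<and> LA_moment A' B' k = 0"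
    and top: "LA_moment A B (n + m - 1) = 1" "LA_moment A' B' (n + m - 1) = 1"
    using assms unfolding LA_cond_iff_LA_moment by auto
  then have "degree (A - A') < n" "degree (B - B') < m"
    by (auto intro: le_less_trans[OF degree_diff_le_max])
  moreover have "LA_moment (A - A') (B - B') k = 0" if "k < n + m" for k
  proof -
    have "k + 1 < n + m \<or> k = n + m - 1"
      using that by linarith
    then show ?thesis
      unfolding LA_moment_diff using zero top by auto
  qed
  ultimately show ?thesis
    using LA_moments_eq_0_imp_eq_0[of "A - A'" n "B - B'" m] by auto
qed

lemma LA_pair_eqI:
  assumes "LA_cond n m A B" "1 \<le> n" "1 \<le> m"
  shows "LA_pair n m = (A, B)"
  unfolding LA_pair_def
proof (rule the_equality)
  show "LA_cond n m (fst (A, B)) (snd (A, B))"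
    using assms by simp
next
  fix AB
  assume "LA_cond n m (fst AB) (snd AB)"
  then show "AB = (A, B)"
    using LA_cond_unique[OF _ assms] by (cases AB) auto
qed

section \<open>The explicit pairs\<close>

definition mirror_poly :: "real poly \<Rightarrow> real poly" where
  "mirror_poly C = C \<circ>\<^sub>p [:0, -1:]"

lemma poly_mirror_poly [simp]: "poly (mirror_poly C) x = poly C (-x)"
  unfolding mirror_poly_def by (simp add: poly_pcompose)

lemma degree_mirror_poly [simp]: "degree (mirror_poly C) = degree C"
  unfolding mirror_poly_def by (simp add: degree_pcompose)

lemma LA_moment_mirror: "LA_moment (mirror_poly C) B k = (-1) ^ k * moment01 C k + moment01 B k"
proof -
  have "integral {-1..0} (\<lambda>x. poly (mirror_poly C) x * x ^ k)
      = integral {-1..-0} (\<lambda>x. (-1) ^ k * (poly C (-x) * (-x) ^ k))"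
  proof -
    have "(-1) ^ k * (-x) ^ k = x ^ k" for x :: real
      by (simp flip: power_mult_distrib)
    then show ?thesis by (simp add: mult.left_commute)
  qed
  also have "\<dots> = (-1) ^ k * moment01 C k"
    using Henstock_Kurzweil_Integration.integral_reflect_real[of 1 0 "\<lambda>x. poly C x * x ^ k"]
    unfolding moment01_def by simp
  finally show ?thesis
    unfolding LA_moment_def moment01_def by simp
qed

lemma degree_p_poly: "degree (p_poly n) \<le> n"
  unfolding p_poly_eq_LA_poly by (rule degree_LA_poly)

lemma degree_q_poly: "degree (q_poly n) \<le> n"
  unfolding q_poly_eq_LA_poly by (rule degree_LA_poly)

lemma LA_pair_diagonal:
  fixes n :: nat
  defines "c \<equiv> 1/2 * (fact (3*n+2) / (fact n * fact (2*n+1)) :: real)"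
  shows "LA_pair (n+1) (n+1) = (mirror_poly (smult (-c) (p_poly n)), smult c (p_poly n))"
proof (rule LA_pair_eqI)
  have moment: "LA_moment (mirror_poly (smult (-c) (p_poly n))) (smult c (p_poly n)) k
      = (1 - (-1) ^ k) * c * moment01 (p_poly n) k" for k
    unfolding LA_moment_mirror moment01_smult by (simp add: algebra_simps)
  have degree: "degree (smult a (p_poly n)) < n + 1" for a
    using degree_p_poly[of n] degree_smult_le[of a "p_poly n"] by linarith
  have top: "2 * c * moment01 (p_poly n) (2 * n + 1) = 1"
    unfolding c_def moment01_p_poly_top by simp
  show "LA_cond (n+1) (n+1) (mirror_poly (smult (-c) (p_poly n))) (smult c (p_poly n))"
    unfolding LA_cond_iff_LA_moment
  proof (intro conjI allI impI)
    fix k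
    assume "k + 1 < n + 1 + (n + 1)"
    then show "LA_moment (mirror_poly (smult (-c) (p_poly n))) (smult c (p_poly n)) k = 0"
      unfolding moment by (cases "even k") (auto simp: moment01_p_poly_odd)
  next
    have top_index: "n + 1 + (n + 1) - 1 = 2 * n + 1"
      by simp
    show "LA_moment (mirror_poly (smult (-c) (p_poly n))) (smult c (p_poly n)) (n + 1 + (n + 1) - 1) = 1"
      unfolding top_index moment using top by simp
  qed (use degree in auto)
qed auto

definition LA_offdiag_B :: "nat \<Rightarrow> real \<Rightarrow> real poly" where
  "LA_offdiag_B n \<sigma> =
     smult (1 / (2 * pochhammer (real n / 2 + 1) n * (fact (2*n) / fact (3*n+1))))
       (smult (rbinom (real n / 2) n) (q_poly n) + smult (\<sigma> * rbinom ((real n - 1) / 2) n) (p_poly n))"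

lemma degree_LA_offdiag_B: "degree (LA_offdiag_B n \<sigma>) \<le> n"
  unfolding LA_offdiag_B_def using degree_p_poly[of n] degree_q_poly[of n]
  by (intro order.trans[OF degree_smult_le] degree_add_le) (auto intro: order.trans[OF degree_smult_le])

lemma degree_LA_offdiag_B_minus_one: "1 \<le> n \<Longrightarrow> degree (LA_offdiag_B n (-1)) < n"
proof -
  assume "1 \<le> n"
  have "coeff (LA_offdiag_B n (-1)) n = 0"
    unfolding LA_offdiag_B_def p_poly_eq_LA_poly q_poly_eq_LA_poly by (simp add: coeff_LA_poly_top)
  then have "degree (LA_offdiag_B n (-1)) \<noteq> n"
    using \<open>1 \<le> n\<close> by (metis degree_0 leading_coeff_0_iff not_one_le_zero)
  with degree_LA_offdiag_B[of n "-1"] show ?thesis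
    by simp
qed

lemma LA_moment_offdiag:
  assumes "k \<le> 2 * n"
  shows "LA_moment (mirror_poly (LA_offdiag_B n \<sigma>)) (LA_offdiag_B n (-\<sigma>)) k = (if k = 2 * n then 1 else 0)"
proof -
  define b where "b = 2 * pochhammer (real n / 2 + 1) n * (fact (2*n) / fact (3*n+1) :: real)"
  define r where "r = rbinom (real n / 2) n"
  define r' where "r' = rbinom ((real n - 1) / 2) n"
  have "pochhammer (real n / 2 + 1) n > 0"
    by (rule pochhammer_pos) simp
  have moment: "LA_moment (mirror_poly (LA_offdiag_B n \<sigma>)) (LA_offdiag_B n (-\<sigma>)) k
      = (((-1) ^ k + 1) * r * moment01 (q_poly n) k + ((-1) ^ k - 1) * \<sigma> * r' * moment01 (p_poly n) k) / b"
    unfolding LA_moment_mirror LA_offdiag_B_def moment01_smult moment01_add b_def[symmetric]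
      r_def[symmetric] r'_def[symmetric]
    by (simp add: algebra_simps add_divide_distrib diff_divide_distrib)
  show ?thesis
  proof (cases "k = 2 * n")
    case True
    have "LA_moment (mirror_poly (LA_offdiag_B n \<sigma>)) (LA_offdiag_B n (-\<sigma>)) k
        = 2 * r * moment01 (q_poly n) (2 * n) / b"
      unfolding moment by (simp add: True)
    also have "\<dots> = 1"
      using \<open>pochhammer (real n / 2 + 1) n > 0\<close> unfolding moment01_q_poly_top r_def rbinom_def b_def by simp
    finally show ?thesis
      using True by simp
  next
    case False
    then show ?thesis
      unfolding moment using assms by (cases "even k") (auto simp: moment01_q_poly_even moment01_p_poly_odd)
  qed
qed

lemma LA_cond_offdiag:
  assumes "n' + m' = 2 * n + 1" "degree (LA_offdiag_B n \<sigma>) < n'" "degree (LA_offdiag_B n (-\<sigma>)) < m'"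
  shows "LA_cond n' m' (mirror_poly (LA_offdiag_B n \<sigma>)) (LA_offdiag_B n (-\<sigma>))"
  unfolding LA_cond_iff_LA_moment using assms by (auto simp: LA_moment_offdiag)

lemma LA_pair_offdiag:
  assumes "1 \<le> n"
  shows "LA_pair (n+1) n = (mirror_poly (LA_offdiag_B n 1), LA_offdiag_B n (-1))"
    and "LA_pair n (n+1) = (mirror_poly (LA_offdiag_B n (-1)), LA_offdiag_B n 1)"
proof -
  have "degree (LA_offdiag_B n 1) < n + 1" "degree (LA_offdiag_B n (-1)) < n"
    using degree_LA_offdiag_B[of n 1] degree_LA_offdiag_B_minus_one[OF assms] by simp_all
  then show "LA_pair (n+1) n = (mirror_poly (LA_offdiag_B n 1), LA_offdiag_B n (-1))"
    and "LA_pair n (n+1) = (mirror_poly (LA_offdiag_B n (-1)), LA_offdiag_B n 1)"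
    using LA_cond_offdiag[of "n+1" n n 1] LA_cond_offdiag[of n "n+1" n "-1"] assms
    by (auto intro!: LA_pair_eqI)
qed

theorem mainTheorem5:
  shows "(\<forall>(n::nat) (x::real).
            poly (LA_B (n+1) (n+1)) x
              = 1/2 * (fact (3*n+2) / (fact n * fact (2*n+1))) * poly (p_poly n) x
          \<and> poly (LA_A (n+1) (n+1)) x = - poly (LA_B (n+1) (n+1)) (-x))
       \<and> (\<forall>(n::nat) (x::real). n \<ge> 1 \<longrightarrow>
            (let b = 2 * pochhammer (real n / 2 + 1) n * (fact (2*n) / fact (3*n+1)) in
              b * poly (LA_B (n+1) n) x
                = rbinom (real n / 2) n * poly (q_poly n) x
                  - rbinom ((real n - 1) / 2) n * poly (p_poly n) x
            \<and> b * poly (LA_B n (n+1)) x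
                = rbinom (real n / 2) n * poly (q_poly n) x
                  + rbinom ((real n - 1) / 2) n * poly (p_poly n) x
            \<and> poly (LA_A (n+1) n) x = poly (LA_B n (n+1)) (-x)
            \<and> poly (LA_A n (n+1)) x = poly (LA_B (n+1) n) (-x)))"
proof -
  have "pochhammer (real n / 2 + 1) n \<noteq> 0" for n :: nat
    using pochhammer_pos[of "real n / 2 + 1" n] by simp
  then show ?thesis
    by (simp add: LA_A_def LA_B_def LA_pair_diagonal[simplified] LA_pair_offdiag[simplified] LA_offdiag_B_def Let_def)
qed

end
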